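(* Let $n\ge 3$ and $m\ge 2$ be integers, $C_n$ the cycle on $n$ vertices and $P_m$ the path on $m$ vertices. Then $AT(C_n+_S P_m)=3$.
   Context: For an orientation $D$, a subdigraph is Eulerian if every vertex has equal in- and outdegree in it; $D$ is an AT-orientation if the numbers of Eulerian subgraphs with an even and with an odd number of arcs differ; $AT(G)$ is the smallest $k$ such that $G$ has an AT-orientation of maximum outdegree at most $k-1$. $S(G)$ is obtained from $G$ by subdividing each edge once, with vertex set identified with $V(G)\cup E(G)$. $G+_S H$ has vertex set $(V(G)\cup E(G))\times V(H)$, with $(u_1,u_2)\sim(v_1,v_2)$ iff [$u_1=v_1\in V(G)$ and $u_2v_2\in E(H)$] or [$u_2=v_2$ and $u_1v_1\in E(S(G))$]. *)

theory Defs
  imports Main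
begin

type_synonym 'a sgraph = "'a set \<times> 'a set set"

definition verts :: "'a sgraph \<Rightarrow> 'a set" where "verts G = fst G"
definition edges :: "'a sgraph \<Rightarrow> 'a set set" where "edges G = snd G"

definition cycle_graph :: "nat \<Rightarrow> nat sgraph" where
  "cycle_graph n = ({0..<n}, {{i, (i + 1) mod n} | i. i < n})"

definition path_graph :: "nat \<Rightarrow> nat sgraph" where
  "path_graph m = ({0..<m}, {{i, i + 1} | i. i + 1 < m})"

text \<open>Subdivision S(G): vertex set V(G) \<union> E(G) (as a disjoint sum), each edge
  e = uv replaced by the two edges u--e and e--v.\<close>
definition subdivision :: "'a sgraph \<Rightarrow> ('a + 'a set) sgraph" where
  "subdivision G = (Inl ` verts G \<union> Inr ` edges G,
                    {{Inl u, Inr e} | u e. e \<in> edges G \<and> u \<in> e})"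

definition splus :: "'a sgraph \<Rightarrow> 'b sgraph \<Rightarrow> (('a + 'a set) \<times> 'b) sgraph" where
  "splus G H = (verts (subdivision G) \<times> verts H,
     {{(u1, u2), (v1, v2)} | u1 u2 v1 v2.
        (u1 \<in> verts (subdivision G) \<and> v1 \<in> verts (subdivision G) \<and>
         u2 \<in> verts H \<and> v2 \<in> verts H) \<and>
        ((u1 = v1 \<and> u1 \<in> Inl ` verts G \<and> {u2, v2} \<in> edges H) \<or>
         (u2 = v2 \<and> {u1, v1} \<in> edges (subdivision G)))})"

definition is_orientation :: "'a sgraph \<Rightarrow> ('a \<times> 'a) set \<Rightarrow> bool" where
  "is_orientation G D \<longleftrightarrow>
     (\<forall>(u, v) \<in> D. {u, v} \<in> edges G) \<and>
     (\<forall>e \<in> edges G. \<exists>!a. a \<in> D \<and> {fst a, snd a} = e)"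

definition outdeg :: "('a \<times> 'a) set \<Rightarrow> 'a \<Rightarrow> nat" where
  "outdeg A v = card {w. (v, w) \<in> A}"

definition indeg :: "('a \<times> 'a) set \<Rightarrow> 'a \<Rightarrow> nat" where
  "indeg A v = card {w. (w, v) \<in> A}"

text \<open>Eulerian (spanning) subdigraphs of D, identified with their arc sets.\<close>
definition eulerian_sub :: "('a \<times> 'a) set \<Rightarrow> ('a \<times> 'a) set \<Rightarrow> bool" where
  "eulerian_sub D A \<longleftrightarrow> A \<subseteq> D \<and> (\<forall>v. indeg A v = outdeg A v)"

definition EE :: "('a \<times> 'a) set \<Rightarrow> nat" where
  "EE D = card {A. eulerian_sub D A \<and> even (card A)}"

definition EO :: "('a \<times> 'a) set \<Rightarrow> nat" where
  "EO D = card {A. eulerian_sub D A \<and> odd (card A)}"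

definition AT_orientation :: "('a \<times> 'a) set \<Rightarrow> bool" where
  "AT_orientation D \<longleftrightarrow> EE D \<noteq> EO D"

text \<open>AT(G): least k such that G has an AT-orientation with maximum outdegree at most k-1
  (i.e. every outdegree is < k).\<close>
definition AT :: "'a sgraph \<Rightarrow> nat" where
  "AT G = (LEAST k. \<exists>D. is_orientation G D \<and> AT_orientation D \<and>
                         (\<forall>v \<in> verts G. outdeg D v < k))"

end

theory Submission
  imports Defs
begin

(* Upper bound: orient each subdivision vertex (e, j) towards the two ends of e and each copy
   of P_m upwards. Every arc raises the height (0 on subdivision vertices, j + 1 on (v, j)),
   so the only Eulerian subdigraph is the empty one; the orientation is therefore an
   AT-orientation, and its maximum outdegree is 2.
   Lower bound: an orientation of maximum outdegree at most 1 has at most |V| arcs, whereas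
   C_n +_S P_m has 2nm vertices and 2nm + n(m - 1) edges. The same counting works for
   G +_S P_m whenever |V(G)| < m |E(G)|. *)

definition simple_graph :: "'a sgraph \<Rightarrow> bool" where
  "simple_graph G \<longleftrightarrow> finite (verts G) \<and> (\<forall>e \<in> edges G. e \<subseteq> verts G \<and> card e = 2)"

lemma finite_edges: "simple_graph G \<Longrightarrow> finite (edges G)"
  unfolding simple_graph_def by (meson Pow_iff finite_Pow_iff finite_subset subsetI)

lemma orientation_subset_verts:
  assumes "simple_graph G" and "is_orientation G D"
  shows "D \<subseteq> verts G \<times> verts G"
  using assms by (fastforce simp: simple_graph_def is_orientation_def)

lemma is_orientationI:
  fixes \<phi> :: "'a \<Rightarrow> 'b::order"
  assumes "\<And>a. a \<in> D \<Longrightarrow> {fst a, snd a} \<in> edges G"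
    and "\<And>e. e \<in> edges G \<Longrightarrow> \<exists>a\<in>D. {fst a, snd a} = e"
    and "\<And>a. a \<in> D \<Longrightarrow> \<phi> (fst a) < \<phi> (snd a)"
  shows "is_orientation G D"
proof -
  have "a = b" if "a \<in> D" "b \<in> D" "{fst a, snd a} = {fst b, snd b}" for a b
    using that assms(3)[OF that(1)] assms(3)[OF that(2)]
    by (auto simp: doubleton_eq_iff prod_eq_iff)
  moreover have "\<forall>(u, v) \<in> D. {u, v} \<in> edges G"
    using assms(1) by auto
  ultimately show ?thesis
    using assms(2) unfolding is_orientation_def by blast
qed

lemma card_edges_eq_card_orientation:
  assumes "is_orientation G D"
  shows "card (edges G) = card D"
proof -
  have "bij_betw (\<lambda>a. {fst a, snd a}) D (edges G)"
    using assms unfolding is_orientation_def bij_betw_def inj_on_def by fastforce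
  then show ?thesis by (simp add: bij_betw_same_card)
qed

lemma card_edges_le_outdeg_bound:
  assumes G: "simple_graph G" and D: "is_orientation G D"
    and out: "\<And>v. v \<in> verts G \<Longrightarrow> outdeg D v \<le> d"
  shows "card (edges G) \<le> d * card (verts G)"
proof -
  have fin: "finite (verts G)" using G by (simp add: simple_graph_def)
  have D_Sigma: "D = (SIGMA v:verts G. {w. (v, w) \<in> D})"
    using orientation_subset_verts[OF G D] by blast
  have "finite {w. (v, w) \<in> D}" for v
    using orientation_subset_verts[OF G D] fin by (auto intro: finite_subset)
  then have "card D = (\<Sum>v\<in>verts G. outdeg D v)"
    by (subst D_Sigma) (simp add: fin outdeg_def)
  also have "\<dots> \<le> d * card (verts G)"
    using sum_bounded_above[of "verts G" "outdeg D" d] out by (simp add: mult.commute)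
  finally show ?thesis using card_edges_eq_card_orientation[OF D] by simp
qed

lemma orientation_outdeg_ge_2:
  assumes "simple_graph G" and "is_orientation G D"
    and "card (verts G) < card (edges G)"
  shows "\<exists>v\<in>verts G. 2 \<le> outdeg D v"
  using card_edges_le_outdeg_bound[OF assms(1,2), of 1] assms(3) by force

lemma eulerian_sub_eq_empty_if_potential:
  fixes \<phi> :: "'a \<Rightarrow> 'b::order"
  assumes "finite D" and increasing: "\<And>a. a \<in> D \<Longrightarrow> \<phi> (fst a) < \<phi> (snd a)"
    and "eulerian_sub D A"
  shows "A = {}"
proof (rule ccontr)
  assume "A \<noteq> {}"
  have AD: "A \<subseteq> D" and balanced: "indeg A v = outdeg A v" for v
    using assms(3) by (auto simp: eulerian_sub_def)
  then have "finite A" using assms(1) finite_subset by blast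
  \<comment> \<open>the tail of an arc with lowest tail has an out-arc, hence an in-arc, whose tail is lower still\<close>
  then obtain a where "is_arg_min (\<phi> \<circ> fst) (\<lambda>b. b \<in> A) a"
    using ex_is_arg_min_if_finite \<open>A \<noteq> {}\<close> by blast
  then have "a \<in> A" and a_min: "\<And>b. b \<in> A \<Longrightarrow> \<not> \<phi> (fst b) < \<phi> (fst a)"
    by (auto simp: is_arg_min_def)
  have "finite {w. (fst a, w) \<in> A}"
    using \<open>finite A\<close> by (rule finite_subset[rotated, OF finite_imageI[of _ snd]]) force
  moreover have "snd a \<in> {w. (fst a, w) \<in> A}" using \<open>a \<in> A\<close> by simp
  ultimately have "outdeg A (fst a) \<noteq> 0" unfolding outdeg_def by (metis card_0_eq empty_iff)
  then obtain u where "(u, fst a) \<in> A"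
    using balanced[of "fst a"] unfolding indeg_def by (metis (no_types, lifting) card.empty empty_Collect_eq)
  then show False
    using increasing[of "(u, fst a)"] a_min[of "(u, fst a)"] AD by auto
qed

lemma AT_orientation_if_potential:
  fixes \<phi> :: "'a \<Rightarrow> 'b::order"
  assumes "finite D" and "\<And>a. a \<in> D \<Longrightarrow> \<phi> (fst a) < \<phi> (snd a)"
  shows "AT_orientation D"
proof -
  have "{A. eulerian_sub D A} = {{}}"
    using eulerian_sub_eq_empty_if_potential[OF assms]
    by (auto simp: eulerian_sub_def indeg_def outdeg_def)
  then have "EE D = 1" and "EO D = 0"
    unfolding EE_def EO_def by (auto simp: Collect_conj_eq)
  then show ?thesis by (simp add: AT_orientation_def)
qed

lemma verts_splus: "verts (splus G H) = (verts G <+> edges G) \<times> verts H"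
  by (simp add: splus_def subdivision_def verts_def Plus_def)

lemma card_verts_splus:
  assumes "simple_graph G" and "finite (verts H)"
  shows "card (verts (splus G H)) = (card (verts G) + card (edges G)) * card (verts H)"
  using assms finite_edges[OF assms(1)]
  by (simp add: verts_splus card_cartesian_product card_Plus simple_graph_def)

(* Vertical edges form a copy of H over each vertex of G, horizontal edges a copy of S(G)
   in each layer j \<in> V(H); the pair (e, u) encodes the incidence u \<in> e. *)
definition splus_vertical_edges :: "'a sgraph \<Rightarrow> 'b sgraph \<Rightarrow> (('a + 'a set) \<times> 'b) set set" where
  "splus_vertical_edges G H = (\<lambda>(u, f). (\<lambda>j. (Inl u, j)) ` f) ` (verts G \<times> edges H)"

definition splus_horizontal_edges :: "'a sgraph \<Rightarrow> 'b sgraph \<Rightarrow> (('a + 'a set) \<times> 'b) set set" where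
  "splus_horizontal_edges G H =
     (\<lambda>((e, u), j). {(Inl u, j), (Inr e, j)}) ` ((SIGMA e:edges G. e) \<times> verts H)"

lemma edges_splus:
  assumes G: "simple_graph G" and H: "simple_graph H"
  shows "edges (splus G H) = splus_vertical_edges G H \<union> splus_horizontal_edges G H"
proof (intro equalityI subsetI)
  fix x assume "x \<in> edges (splus G H)"
  then obtain u1 u2 v1 v2 where x: "x = {(u1, u2), (v1, v2)}" and "u2 \<in> verts H"
    and "(u1 = v1 \<and> u1 \<in> Inl ` verts G \<and> {u2, v2} \<in> edges H) \<or>
         (u2 = v2 \<and> {u1, v1} \<in> edges (subdivision G))"
    unfolding splus_def edges_def[of "(_, _)"] by auto
  then show "x \<in> splus_vertical_edges G H \<union> splus_horizontal_edges G H"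
  proof (elim disjE conjE)
    assume "u1 = v1" "u1 \<in> Inl ` verts G" "{u2, v2} \<in> edges H"
    moreover from this obtain u where "u \<in> verts G" "u1 = Inl u" by blast
    ultimately have "x \<in> splus_vertical_edges G H"
      unfolding splus_vertical_edges_def x by (auto intro!: image_eqI[of _ _ "(u, {u2, v2})"])
    then show ?thesis ..
  next
    assume "u2 = v2" "{u1, v1} \<in> edges (subdivision G)"
    then obtain e u where "e \<in> edges G" "u \<in> e" "x = {(Inl u, u2), (Inr e, u2)}"
      unfolding x subdivision_def edges_def[of "(_, _)"] by (auto simp: doubleton_eq_iff insert_commute)
    then have "x \<in> splus_horizontal_edges G H"
      unfolding splus_horizontal_edges_def using \<open>u2 \<in> verts H\<close>
      by (auto intro!: image_eqI[of _ _ "((e, u), u2)"])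
    then show ?thesis ..
  qed
next
  fix x assume "x \<in> splus_vertical_edges G H \<union> splus_horizontal_edges G H"
  then show "x \<in> edges (splus G H)"
  proof
    assume "x \<in> splus_vertical_edges G H"
    then obtain u a b where "u \<in> verts G" "{a, b} \<in> edges H" "x = {(Inl u, a), (Inl u, b)}"
      using H unfolding splus_vertical_edges_def simple_graph_def by (auto simp: card_2_iff)
    moreover have "a \<in> verts H" "b \<in> verts H"
      using H \<open>{a, b} \<in> edges H\<close> unfolding simple_graph_def by auto
    ultimately show ?thesis
      unfolding splus_def edges_def[of "(_, _)"] snd_conv
      by (intro CollectI exI[of _ "Inl u"] exI[of _ a] exI[of _ "Inl u"] exI[of _ b])
        (auto simp: verts_def[of "(_, _)"] subdivision_def)
  next
    assume "x \<in> splus_horizontal_edges G H"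
    then obtain e u j where "e \<in> edges G" "u \<in> e" "j \<in> verts H" "x = {(Inl u, j), (Inr e, j)}"
      unfolding splus_horizontal_edges_def by auto
    moreover have "u \<in> verts G"
      using G \<open>e \<in> edges G\<close> \<open>u \<in> e\<close> unfolding simple_graph_def by auto
    moreover have "{Inl u, Inr e} \<in> edges (subdivision G)"
      using \<open>e \<in> edges G\<close> \<open>u \<in> e\<close> unfolding subdivision_def edges_def[of "(_, _)"] snd_conv by blast
    ultimately show ?thesis
      unfolding splus_def edges_def[of "(_, _)"] snd_conv
      by (intro CollectI exI[of _ "Inl u"] exI[of _ j] exI[of _ "Inr e"] exI[of _ j])
        (simp add: verts_def[of "(_, _)"] subdivision_def)
  qed
qed

lemma card_splus_vertical_edges:
  assumes "simple_graph G" and "simple_graph H"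
  shows "card (splus_vertical_edges G H) = card (verts G) * card (edges H)"
proof -
  have "inj_on (\<lambda>(u, f). (\<lambda>j. (Inl u, j)) ` f) (verts G \<times> edges H)"
  proof (rule inj_onI, clarify)
    fix u f u' f'
    assume "f \<in> edges H" and eq: "(\<lambda>j. (Inl u, j)) ` f = (\<lambda>j. (Inl u', j)) ` f'"
    then have "f \<noteq> {}" using assms(2) by (auto simp: simple_graph_def)
    then show "u = u' \<and> f = f'"
      using arg_cong[OF eq, of "image fst"] arg_cong[OF eq, of "image snd"] by (auto simp: image_image)
  qed
  then show ?thesis
    unfolding splus_vertical_edges_def using card_image card_cartesian_product by metis
qed

lemma card_splus_horizontal_edges:
  assumes "simple_graph G" and "finite (verts H)"
  shows "card (splus_horizontal_edges G H) = 2 * card (edges G) * card (verts H)"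
proof -
  have "inj_on (\<lambda>((e, u), j). {(Inl u, j), (Inr e, j)}) ((SIGMA e:edges G. e) \<times> verts H)"
    by (rule inj_onI) (clarsimp simp: doubleton_eq_iff)
  moreover have "card (SIGMA e:edges G. e) = 2 * card (edges G)"
    using assms(1) finite_edges[OF assms(1)]
    by (simp add: simple_graph_def card_ge_0_finite)
  ultimately show ?thesis
    unfolding splus_horizontal_edges_def by (simp add: card_image card_cartesian_product)
qed

lemma card_edges_splus:
  assumes "simple_graph G" and "simple_graph H"
  shows "card (edges (splus G H)) =
           card (verts G) * card (edges H) + 2 * card (edges G) * card (verts H)"
proof -
  have "splus_vertical_edges G H \<inter> splus_horizontal_edges G H = {}"
    unfolding splus_vertical_edges_def splus_horizontal_edges_def by force
  moreover have "finite (splus_vertical_edges G H)" "finite (splus_horizontal_edges G H)"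
    using assms finite_edges[OF assms(1)] finite_edges[OF assms(2)]
    unfolding splus_vertical_edges_def splus_horizontal_edges_def simple_graph_def
    by (auto intro!: finite_imageI finite_cartesian_product finite_SigmaI intro: finite_subset)
  ultimately show ?thesis
    using assms by (simp add: edges_splus card_Un_disjoint card_splus_vertical_edges
        card_splus_horizontal_edges simple_graph_def)
qed

lemma simple_graph_splus:
  assumes G: "simple_graph G" and H: "simple_graph H"
  shows "simple_graph (splus G H)"
  unfolding simple_graph_def
proof
  show "finite (verts (splus G H))"
    using assms finite_edges[OF G] by (simp add: verts_splus simple_graph_def)
  show "\<forall>x \<in> edges (splus G H). x \<subseteq> verts (splus G H) \<and> card x = 2"
  proof
    fix x assume "x \<in> edges (splus G H)"
    then consider u f where "u \<in> verts G" "f \<in> edges H" "x = (\<lambda>j. (Inl u, j)) ` f"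
      | e u j where "e \<in> edges G" "u \<in> e" "j \<in> verts H" "x = {(Inl u, j), (Inr e, j)}"
      unfolding edges_splus[OF assms] splus_vertical_edges_def splus_horizontal_edges_def by fastforce
    then show "x \<subseteq> verts (splus G H) \<and> card x = 2"
    proof cases
      case 1
      then show ?thesis
        using H by (auto simp: verts_splus simple_graph_def card_image inj_on_def)
    next
      case 2
      then show ?thesis
        using G by (auto simp: verts_splus simple_graph_def)
    qed
  qed
qed

lemma verts_cycle_graph: "verts (cycle_graph n) = {0..<n}"
  by (simp add: verts_def cycle_graph_def)

lemma edges_cycle_graph: "edges (cycle_graph n) = (\<lambda>i. {i, (i + 1) mod n}) ` {0..<n}"
  by (auto simp: edges_def cycle_graph_def)

lemma simple_graph_cycle_graph:
  assumes "2 \<le> n"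
  shows "simple_graph (cycle_graph n)"
proof -
  have "card {i, (i + 1) mod n} = 2" if "i < n" for i
    using assms that by (cases "i + 1 < n") (auto simp: le_mod_geq)
  then show ?thesis
    unfolding simple_graph_def verts_cycle_graph edges_cycle_graph by auto
qed

lemma card_edges_cycle_graph:
  assumes "3 \<le> n"
  shows "card (edges (cycle_graph n)) = n"
proof -
  have "i = i'" if "i < n" "i' < n" "{i, (i + 1) mod n} = {i', (i' + 1) mod n}" for i i'
  proof (rule ccontr)
    assume "i \<noteq> i'"
    then have "i = ((i + 1) mod n + 1) mod n"
      using that(3) by (auto simp: doubleton_eq_iff)
    then have "i = (i + 2) mod n" by (simp add: mod_Suc_eq)
    then show False
      using that(1) assms by (cases "i + 2 < n") (auto simp: le_mod_geq)
  qed
  then have "inj_on (\<lambda>i. {i, (i + 1) mod n}) {0..<n}"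
    by (auto intro: inj_onI)
  then show ?thesis by (simp add: edges_cycle_graph card_image)
qed

lemma verts_path_graph: "verts (path_graph m) = {0..<m}"
  by (simp add: verts_def path_graph_def)

lemma edges_path_graph: "edges (path_graph m) = (\<lambda>i. {i, i + 1}) ` {0..<m - 1}"
  by (auto simp: edges_def path_graph_def)

lemma simple_graph_path_graph: "simple_graph (path_graph m)"
  unfolding simple_graph_def verts_path_graph edges_path_graph by auto

lemma card_edges_path_graph: "card (edges (path_graph m)) = m - 1"
proof -
  have "inj_on (\<lambda>i. {i, i + 1}) {0..<m - 1}"
    by (rule inj_onI) (auto simp: doubleton_eq_iff)
  then show ?thesis by (simp add: edges_path_graph card_image)
qed

definition splus_path_orientation ::
    "'a sgraph \<Rightarrow> nat \<Rightarrow> ((('a + 'a set) \<times> nat) \<times> (('a + 'a set) \<times> nat)) set" where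
  "splus_path_orientation G m =
     {((Inr e, j), (Inl u, j)) | e u j. e \<in> edges G \<and> u \<in> e \<and> j < m} \<union>
     {((Inl u, j), (Inl u, Suc j)) | u j. u \<in> verts G \<and> Suc j < m}"

definition splus_path_height :: "('a + 'a set) \<times> nat \<Rightarrow> nat" where
  "splus_path_height v = (case fst v of Inl _ \<Rightarrow> Suc (snd v) | Inr _ \<Rightarrow> 0)"

lemma splus_path_height_increasing:
  "a \<in> splus_path_orientation G m \<Longrightarrow> splus_path_height (fst a) < splus_path_height (snd a)"
  by (auto simp: splus_path_orientation_def splus_path_height_def)

lemma is_orientation_splus_path_orientation:
  assumes "simple_graph G"
  shows "is_orientation (splus G (path_graph m)) (splus_path_orientation G m)"
proof (rule is_orientationI[where \<phi> = splus_path_height])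
  fix a assume "a \<in> splus_path_orientation G m"
  then consider e u j where "e \<in> edges G" "u \<in> e" "j < m" "a = ((Inr e, j), (Inl u, j))"
    | u j where "u \<in> verts G" "Suc j < m" "a = ((Inl u, j), (Inl u, Suc j))"
    unfolding splus_path_orientation_def by blast
  then show "{fst a, snd a} \<in> edges (splus G (path_graph m))"
  proof cases
    case 1
    then show ?thesis
      unfolding edges_splus[OF assms simple_graph_path_graph] splus_horizontal_edges_def
      by (auto simp: verts_path_graph insert_commute intro!: image_eqI[of _ _ "((e, u), j)"])
  next
    case 2
    then show ?thesis
      unfolding edges_splus[OF assms simple_graph_path_graph] splus_vertical_edges_def
      by (auto simp: edges_path_graph intro!: image_eqI[of _ _ "(u, {j, Suc j})"])
  qed
next
  fix x assume "x \<in> edges (splus G (path_graph m))"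
  then have "x \<in> splus_vertical_edges G (path_graph m) \<union> splus_horizontal_edges G (path_graph m)"
    by (simp add: edges_splus[OF assms simple_graph_path_graph])
  then show "\<exists>a \<in> splus_path_orientation G m. {fst a, snd a} = x"
  proof
    assume "x \<in> splus_vertical_edges G (path_graph m)"
    then obtain u i where "u \<in> verts G" "Suc i < m" "x = {(Inl u, i), (Inl u, Suc i)}"
      unfolding splus_vertical_edges_def edges_path_graph by (auto simp: less_diff_conv)
    then show ?thesis
      by (intro bexI[of _ "((Inl u, i), (Inl u, Suc i))"]) (auto simp: splus_path_orientation_def)
  next
    assume "x \<in> splus_horizontal_edges G (path_graph m)"
    then obtain e u j where "e \<in> edges G" "u \<in> e" "j < m" "x = {(Inl u, j), (Inr e, j)}"
      unfolding splus_horizontal_edges_def by (auto simp: verts_path_graph)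
    then show ?thesis
      by (intro bexI[of _ "((Inr e, j), (Inl u, j))"])
        (auto simp: splus_path_orientation_def insert_commute)
  qed
qed (rule splus_path_height_increasing)

lemma outdeg_splus_path_orientation:
  assumes "simple_graph G" and "v \<in> verts (splus G (path_graph m))"
  shows "outdeg (splus_path_orientation G m) v \<le> 2"
proof -
  obtain x j where v: "v = (x, j)" by fastforce
  show ?thesis
  proof (cases x)
    case (Inl u)
    have "{w. (v, w) \<in> splus_path_orientation G m} \<subseteq> {(Inl u, Suc j)}"
      by (auto simp: splus_path_orientation_def v Inl)
    from card_mono[OF _ this] show ?thesis by (simp add: outdeg_def)
  next
    case (Inr e)
    have "e \<in> edges G" using assms(2) unfolding verts_splus v Inr by blast
    then have "finite e" "card e = 2"
      using assms(1) unfolding simple_graph_def by (auto intro: card_ge_0_finite)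
    let ?N = "(\<lambda>u. (Inl u, j) :: ('a + 'a set) \<times> nat) ` e"
    have "{w. (v, w) \<in> splus_path_orientation G m} \<subseteq> ?N"
      by (auto simp: splus_path_orientation_def v Inr)
    then have "outdeg (splus_path_orientation G m) v \<le> card ?N"
      unfolding outdeg_def by (intro card_mono finite_imageI \<open>finite e\<close>)
    also have "\<dots> \<le> card e" using \<open>finite e\<close> by (rule card_image_le)
    finally show ?thesis using \<open>card e = 2\<close> by simp
  qed
qed

lemma AT_orientation_splus_path_orientation:
  assumes "simple_graph G"
  shows "AT_orientation (splus_path_orientation G m)"
proof -
  let ?S = "splus G (path_graph m)"
  have S: "simple_graph ?S" using assms simple_graph_path_graph by (rule simple_graph_splus)
  have "splus_path_orientation G m \<subseteq> verts ?S \<times> verts ?S"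
    using S is_orientation_splus_path_orientation[OF assms] by (rule orientation_subset_verts)
  then have "finite (splus_path_orientation G m)"
    using S by (auto simp: simple_graph_def intro: finite_subset)
  then show ?thesis using splus_path_height_increasing by (rule AT_orientation_if_potential)
qed

lemma card_verts_less_card_edges_splus_path_graph:
  assumes G: "simple_graph G" and dense: "card (verts G) < m * card (edges G)"
  shows "card (verts (splus G (path_graph m))) < card (edges (splus G (path_graph m)))"
proof -
  obtain k where "m = Suc k" using dense by (cases m) auto
  moreover have "card (verts (splus G (path_graph m))) = (card (verts G) + card (edges G)) * m"
    using G by (simp add: card_verts_splus verts_path_graph)
  moreover have "card (edges (splus G (path_graph m))) =
                   card (verts G) * (m - 1) + 2 * card (edges G) * m"
    using G simple_graph_path_graph
    by (simp add: card_edges_splus card_edges_path_graph verts_path_graph)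
  ultimately show ?thesis using dense by (simp add: algebra_simps)
qed

theorem AT_splus_path_graph:
  assumes G: "simple_graph G" and dense: "card (verts G) < m * card (edges G)"
  shows "AT (splus G (path_graph m)) = 3"
  unfolding AT_def
proof (rule Least_equality)
  let ?S = "splus G (path_graph m)" and ?D = "splus_path_orientation G m"
  have "\<forall>v \<in> verts ?S. outdeg ?D v < 3"
    using outdeg_splus_path_orientation[OF G] by (auto intro: le_less_trans[of _ 2])
  then show "\<exists>D. is_orientation ?S D \<and> AT_orientation D \<and> (\<forall>v \<in> verts ?S. outdeg D v < 3)"
    using is_orientation_splus_path_orientation[OF G] AT_orientation_splus_path_orientation[OF G]
    by blast
next
  fix k
  assume "\<exists>D. is_orientation (splus G (path_graph m)) D \<and> AT_orientation D \<and>
              (\<forall>v \<in> verts (splus G (path_graph m)). outdeg D v < k)"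
  then show "3 \<le> k"
    using orientation_outdeg_ge_2[OF simple_graph_splus[OF G simple_graph_path_graph] _
        card_verts_less_card_edges_splus_path_graph[OF G dense]]
    by fastforce
qed

theorem corollary3p4:
  fixes n m :: nat
  assumes "n \<ge> 3" and "m \<ge> 2"
  shows "AT (splus (cycle_graph n) (path_graph m)) = 3"
proof (rule AT_splus_path_graph)
  show "simple_graph (cycle_graph n)" using assms(1) by (intro simple_graph_cycle_graph) simp
  show "card (verts (cycle_graph n)) < m * card (edges (cycle_graph n))"
    using assms by (simp add: card_edges_cycle_graph verts_cycle_graph)
qed

end
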